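(* Let $A$ be a real symmetric $n\times n$ matrix with symmetric tropical rank $r$. Choose a real number $M$ less than every entry of $A$ and a real number $P$ greater than every entry of $A$, and define the $(n+1)\times(n+1)$ matrix $$A'=\begin{pmatrix}A&\mathbf P\\ \mathbf P^{T}&M\end{pmatrix},$$ where $\mathbf P$ is the column vector of length $n$ with all entries $P$. Then $A'$ has symmetric tropical rank $r+1$.
   Context: For an $r\times r$ submatrix of a real symmetric matrix $A$ with row index set $I$ and column index set $J$, each bijection $\rho:I\to J$ gives a monomial $\prod_{i\in I}X_{i,\rho(i)}$ in commuting variables subject to $X_{i,j}=X_{j,i}$, with value $\sum_{i\in I}A_{i,\rho(i)}$; the submatrix is symmetrically tropically singular if the minimum value is attained by at least two distinct monomials. The symmetric tropical rank of $A$ is the largest $r$ such that $A$ has an $r\times r$ submatrix (arbitrary row and column sets) that is not symmetrically tropically singular. *)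

theory Defs
  imports Complex_Main "HOL-Library.Multiset"
begin

text \<open>Matrices are functions nat => nat => real, the n x n matrix uses indices 0..n-1.
 A monomial prod_{i in I} X_{i,rho i} in commuting variables with X_ij = X_ji is
 the multiset of unordered index pairs {i, rho i}.\<close>

definition sym_monomial :: "(nat \<Rightarrow> nat) \<Rightarrow> nat set \<Rightarrow> nat set multiset" where
  "sym_monomial \<rho> I = image_mset (\<lambda>i. {i, \<rho> i}) (mset_set I)"

definition trop_value :: "(nat \<Rightarrow> nat \<Rightarrow> real) \<Rightarrow> (nat \<Rightarrow> nat) \<Rightarrow> nat set \<Rightarrow> real" where
  "trop_value A \<rho> I = (\<Sum>i\<in>I. A i (\<rho> i))"

definition sym_trop_singular :: "(nat \<Rightarrow> nat \<Rightarrow> real) \<Rightarrow> nat set \<Rightarrow> nat set \<Rightarrow> bool" where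
  "sym_trop_singular A I J \<longleftrightarrow>
     (\<exists>\<rho>1 \<rho>2. bij_betw \<rho>1 I J \<and> bij_betw \<rho>2 I J \<and>
        (\<forall>\<sigma>. bij_betw \<sigma> I J \<longrightarrow> trop_value A \<rho>1 I \<le> trop_value A \<sigma> I) \<and>
        (\<forall>\<sigma>. bij_betw \<sigma> I J \<longrightarrow> trop_value A \<rho>2 I \<le> trop_value A \<sigma> I) \<and>
        sym_monomial \<rho>1 I \<noteq> sym_monomial \<rho>2 I)"

definition sym_trop_rank :: "nat \<Rightarrow> (nat \<Rightarrow> nat \<Rightarrow> real) \<Rightarrow> nat" where
  "sym_trop_rank n A = Max {r. \<exists>I J. I \<subseteq> {..<n} \<and> J \<subseteq> {..<n} \<and> card I = r \<and> card J = r
                                  \<and> \<not> sym_trop_singular A I J}"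

end

theory Submission
  imports Defs "HOL-Library.FuncSet" "HOL-Combinatorics.Transposition"
begin

text \<open>In the bordered matrix every tropically optimal bijection of a square submatrix that uses
  both row n and column n matches n with n: if it matched i with n and n with j, where i, j < n,
  then switching to i with j and n with n replaces the cost P + P by A i j + M, which is smaller.
  So bordering a nonsingular submatrix of A with row and column n keeps it nonsingular (its
  optimal bijections are the old ones extended by n to n), giving rank at least r + 1.
  Conversely, deleting the row and column of a matched pair of an optimal bijection keeps a
  submatrix nonsingular, and choosing the pair through row n or column n lands inside A, giving
  rank at most r + 1.\<close>

definition trop_optimal :: "(nat \<Rightarrow> nat \<Rightarrow> real) \<Rightarrow> nat set \<Rightarrow> nat set \<Rightarrow> (nat \<Rightarrow> nat) \<Rightarrow> bool" where
  "trop_optimal A I J \<rho> \<longleftrightarrow>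
     bij_betw \<rho> I J \<and> (\<forall>\<sigma>. bij_betw \<sigma> I J \<longrightarrow> trop_value A \<rho> I \<le> trop_value A \<sigma> I)"

lemma sym_trop_singular_iff_trop_optimal:
  "sym_trop_singular A I J \<longleftrightarrow>
     (\<exists>\<rho>1 \<rho>2. trop_optimal A I J \<rho>1 \<and> trop_optimal A I J \<rho>2 \<and> sym_monomial \<rho>1 I \<noteq> sym_monomial \<rho>2 I)"
  unfolding sym_trop_singular_def trop_optimal_def by blast

lemma trop_value_cong:
  "(\<And>i. i \<in> I \<Longrightarrow> \<rho> i = \<sigma> i) \<Longrightarrow> trop_value A \<rho> I = trop_value A \<sigma> I"
  unfolding trop_value_def by (rule sum.cong) simp_all

lemma trop_value_insert:
  "finite I \<Longrightarrow> i \<notin> I \<Longrightarrow> trop_value A \<rho> (insert i I) = A i (\<rho> i) + trop_value A \<rho> I"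
  unfolding trop_value_def by simp

lemma trop_value_fun_upd_outside:
  "i \<notin> I \<Longrightarrow> trop_value A (\<rho>(i := j)) I = trop_value A \<rho> I"
  by (rule trop_value_cong) auto

lemma trop_value_insert_fun_upd:
  "finite I \<Longrightarrow> i \<notin> I \<Longrightarrow> trop_value A (\<rho>(i := j)) (insert i I) = A i j + trop_value A \<rho> I"
  by (simp add: trop_value_insert trop_value_fun_upd_outside)

lemma trop_value_fun_upd:
  assumes "finite I" "i \<in> I"
  shows "trop_value A (\<rho>(i := j)) I = trop_value A \<rho> I - A i (\<rho> i) + A i j"
proof -
  have "trop_value A (\<rho>(i := j)) (insert i (I - {i})) = A i j + trop_value A \<rho> (I - {i})"
    using assms(1) by (rule trop_value_insert_fun_upd[OF finite_Diff]) simp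
  moreover have "trop_value A \<rho> (insert i (I - {i})) = A i (\<rho> i) + trop_value A \<rho> (I - {i})"
    using assms(1) by (rule trop_value_insert[OF finite_Diff]) simp
  moreover have "insert i (I - {i}) = I" using assms(2) by blast
  ultimately show ?thesis by simp
qed

lemma sym_monomial_insert_fun_upd:
  assumes "finite I" "i \<notin> I"
  shows "sym_monomial (\<rho>(i := j)) (insert i I) = add_mset {i, j} (sym_monomial \<rho> I)"
proof -
  have "image_mset (\<lambda>k. {k, (\<rho>(i := j)) k}) (mset_set I) = image_mset (\<lambda>k. {k, \<rho> k}) (mset_set I)"
    using assms by (intro image_mset_cong) auto
  then show ?thesis using assms unfolding sym_monomial_def by simp
qed

lemma bij_betw_insert_fun_upd:
  assumes "i \<notin> I" "j \<notin> J" "bij_betw \<rho> I J"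
  shows "bij_betw (\<rho>(i := j)) (insert i I) (insert j J)"
proof -
  have "bij_betw (\<rho>(i := j)) I J"
    using assms(1,3) by (subst bij_betw_cong[of I _ \<rho>]) auto
  then show ?thesis
    using assms(1,2) notIn_Un_bij_betw[of i I "\<rho>(i := j)" J] by simp
qed

lemma bij_betw_remove:
  assumes "bij_betw \<rho> I J" "i \<in> I"
  shows "bij_betw \<rho> (I - {i}) (J - {\<rho> i})"
  using assms bij_betw_DiffI[of \<rho> I J "{i}" "{\<rho> i}"] by (auto simp: bij_betw_def)

lemma trop_optimal_cong:
  assumes "\<And>i j. i \<in> I \<Longrightarrow> j \<in> J \<Longrightarrow> B i j = A i j"
  shows "trop_optimal B I J = trop_optimal A I J"
proof -
  have "trop_value B \<sigma> I = trop_value A \<sigma> I" if "bij_betw \<sigma> I J" for \<sigma>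
    using assms that unfolding trop_value_def bij_betw_def by (auto intro!: sum.cong)
  then show ?thesis unfolding trop_optimal_def by (intro ext) auto
qed

lemma sym_trop_singular_cong:
  assumes "\<And>i j. i \<in> I \<Longrightarrow> j \<in> J \<Longrightarrow> B i j = A i j"
  shows "sym_trop_singular B I J = sym_trop_singular A I J"
  by (simp only: sym_trop_singular_iff_trop_optimal trop_optimal_cong[OF assms])

lemma trop_optimal_exists:
  assumes "finite I" "finite J" "card I = card J"
  obtains \<rho> where "trop_optimal A I J \<rho>"
proof -
  let ?S = "{\<sigma> \<in> I \<rightarrow>\<^sub>E J. bij_betw \<sigma> I J}"
  have restrict_in: "restrict \<sigma> I \<in> ?S" if "bij_betw \<sigma> I J" for \<sigma>
    using that by (auto simp: restrict_PiE_iff bij_betw_def)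
  have restrict_value: "trop_value A (restrict \<sigma> I) I = trop_value A \<sigma> I" for \<sigma>
    by (rule trop_value_cong) simp
  have "finite ?S" using assms(1,2) by (simp add: finite_PiE)
  moreover obtain \<rho>0 where "bij_betw \<rho>0 I J" using finite_same_card_bij assms by blast
  then have "?S \<noteq> {}" using restrict_in by blast
  ultimately obtain \<rho> where "is_arg_min (\<lambda>\<sigma>. trop_value A \<sigma> I) (\<lambda>\<sigma>. \<sigma> \<in> ?S) \<rho>"
    using ex_is_arg_min_if_finite by blast
  then have \<rho>: "\<rho> \<in> ?S" and min: "\<And>\<sigma>. \<sigma> \<in> ?S \<Longrightarrow> trop_value A \<rho> I \<le> trop_value A \<sigma> I"
    by (simp_all add: is_arg_min_linorder)
  have "trop_optimal A I J \<rho>" unfolding trop_optimal_def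
  proof (intro conjI allI impI)
    show "bij_betw \<rho> I J" using \<rho> by simp
    fix \<sigma> assume "bij_betw \<sigma> I J"
    then show "trop_value A \<rho> I \<le> trop_value A \<sigma> I"
      using min[OF restrict_in] restrict_value by metis
  qed
  then show ?thesis by (rule that)
qed

lemma trop_optimal_restrict:
  assumes "finite I" "i \<notin> I" "j \<notin> J"
    and "trop_optimal A (insert i I) (insert j J) \<rho>" and "\<rho> i = j"
  shows "trop_optimal A I J \<rho>"
proof -
  have bij: "bij_betw \<rho> (insert i I) (insert j J)"
    and opt: "\<And>\<sigma>. bij_betw \<sigma> (insert i I) (insert j J) \<Longrightarrow>
                trop_value A \<rho> (insert i I) \<le> trop_value A \<sigma> (insert i I)"
    using assms(4) unfolding trop_optimal_def by blast+
  show ?thesis unfolding trop_optimal_def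
  proof (intro conjI allI impI)
    show "bij_betw \<rho> I J" using bij_betw_remove[OF bij, of i] assms(2,3,5) by simp
    fix \<sigma> assume "bij_betw \<sigma> I J"
    then have "trop_value A \<rho> (insert i I) \<le> trop_value A (\<sigma>(i := j)) (insert i I)"
      by (intro opt bij_betw_insert_fun_upd assms(2,3))
    then show "trop_value A \<rho> I \<le> trop_value A \<sigma> I"
      using assms(1,2,5) by (simp add: trop_value_insert trop_value_fun_upd_outside)
  qed
qed

lemma trop_optimal_extend:
  assumes "finite I" "i \<notin> I" "j \<notin> J"
    and \<rho>: "trop_optimal A (insert i I) (insert j J) \<rho>" "\<rho> i = j"
    and \<tau>: "trop_optimal A I J \<tau>"
  shows "trop_optimal A (insert i I) (insert j J) (\<tau>(i := j))"
  unfolding trop_optimal_def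
proof (intro conjI allI impI)
  show "bij_betw (\<tau>(i := j)) (insert i I) (insert j J)"
    using \<tau> unfolding trop_optimal_def by (intro bij_betw_insert_fun_upd assms(2,3)) blast
  have "trop_value A \<tau> I \<le> trop_value A \<rho> I"
    using \<tau> trop_optimal_restrict[OF assms(1-3) \<rho>] unfolding trop_optimal_def by blast
  then have "trop_value A (\<tau>(i := j)) (insert i I) \<le> trop_value A \<rho> (insert i I)"
    using assms(1,2) \<rho>(2) by (simp add: trop_value_insert trop_value_fun_upd_outside)
  also fix \<sigma> assume "bij_betw \<sigma> (insert i I) (insert j J)"
  then have "trop_value A \<rho> (insert i I) \<le> trop_value A \<sigma> (insert i I)"
    using \<rho>(1) unfolding trop_optimal_def by blast
  finally show "trop_value A (\<tau>(i := j)) (insert i I) \<le> trop_value A \<sigma> (insert i I)" .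
qed

lemma sym_trop_singular_extend:
  assumes "finite I" "i \<notin> I" "j \<notin> J"
    and "trop_optimal A (insert i I) (insert j J) \<rho>" "\<rho> i = j"
    and "sym_trop_singular A I J"
  shows "sym_trop_singular A (insert i I) (insert j J)"
proof -
  obtain \<tau>1 \<tau>2 where \<tau>: "trop_optimal A I J \<tau>1" "trop_optimal A I J \<tau>2"
    and neq: "sym_monomial \<tau>1 I \<noteq> sym_monomial \<tau>2 I"
    using assms(6) unfolding sym_trop_singular_iff_trop_optimal by blast
  have "trop_optimal A (insert i I) (insert j J) (\<tau>1(i := j))"
    "trop_optimal A (insert i I) (insert j J) (\<tau>2(i := j))"
    using trop_optimal_extend[OF assms(1-5)] \<tau> by blast+
  moreover have "sym_monomial (\<tau>1(i := j)) (insert i I) \<noteq> sym_monomial (\<tau>2(i := j)) (insert i I)"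
    using neq assms(1,2) by (simp add: sym_monomial_insert_fun_upd)
  ultimately show ?thesis unfolding sym_trop_singular_iff_trop_optimal by blast
qed

lemma sym_trop_singular_restrict:
  assumes "finite I" "i \<notin> I" "j \<notin> J"
    and matched: "\<And>\<rho>. trop_optimal A (insert i I) (insert j J) \<rho> \<Longrightarrow> \<rho> i = j"
    and "sym_trop_singular A (insert i I) (insert j J)"
  shows "sym_trop_singular A I J"
proof -
  obtain \<rho>1 \<rho>2 where \<rho>: "trop_optimal A (insert i I) (insert j J) \<rho>1"
      "trop_optimal A (insert i I) (insert j J) \<rho>2"
    and neq: "sym_monomial \<rho>1 (insert i I) \<noteq> sym_monomial \<rho>2 (insert i I)"
    using assms(5) unfolding sym_trop_singular_iff_trop_optimal by blast
  have "trop_optimal A I J \<rho>1" "trop_optimal A I J \<rho>2"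
    using trop_optimal_restrict[OF assms(1-3)] \<rho> matched by blast+
  moreover have "sym_monomial \<rho>1 I \<noteq> sym_monomial \<rho>2 I"
  proof -
    have "\<rho>1(i := j) = \<rho>1" "\<rho>2(i := j) = \<rho>2" using \<rho> matched by auto
    then show ?thesis
      using neq assms(1,2) sym_monomial_insert_fun_upd[of I i _ j] by metis
  qed
  ultimately show ?thesis unfolding sym_trop_singular_iff_trop_optimal by blast
qed

lemma sym_trop_rank_ge:
  assumes "I \<subseteq> {..<n}" "J \<subseteq> {..<n}" "card I = card J" "\<not> sym_trop_singular A I J"
  shows "card I \<le> sym_trop_rank n A"
  unfolding sym_trop_rank_def
proof (rule Max_ge)
  show "finite {r. \<exists>I J. I \<subseteq> {..<n} \<and> J \<subseteq> {..<n} \<and> card I = r \<and> card J = r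
                       \<and> \<not> sym_trop_singular A I J}"
    by (rule finite_subset[of _ "{..n}"]) (auto dest: card_mono[rotated])
  show "card I \<in> {r. \<exists>I J. I \<subseteq> {..<n} \<and> J \<subseteq> {..<n} \<and> card I = r \<and> card J = r
                       \<and> \<not> sym_trop_singular A I J}"
    using assms by (intro CollectI exI[of _ I] exI[of _ J]) simp
qed

lemma sym_trop_rank_attained:
  obtains I J where "I \<subseteq> {..<n}" "J \<subseteq> {..<n}" "card I = sym_trop_rank n A" "card J = sym_trop_rank n A"
    "\<not> sym_trop_singular A I J"
proof -
  let ?R = "{r. \<exists>I J. I \<subseteq> {..<n} \<and> J \<subseteq> {..<n} \<and> card I = r \<and> card J = r
                   \<and> \<not> sym_trop_singular A I J}"
  have "finite ?R" by (rule finite_subset[of _ "{..n}"]) (auto dest: card_mono[rotated])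
  moreover have "\<not> sym_trop_singular A {} {}"
    unfolding sym_trop_singular_def sym_monomial_def by simp
  then have "0 \<in> ?R" by force
  ultimately have "Max ?R \<in> ?R" by (intro Max_in) auto
  then show ?thesis using that unfolding sym_trop_rank_def by blast
qed

definition bordered :: "(nat \<Rightarrow> nat \<Rightarrow> real) \<Rightarrow> nat \<Rightarrow> real \<Rightarrow> real \<Rightarrow> nat \<Rightarrow> nat \<Rightarrow> real" where
  "bordered A n P M = (\<lambda>i j. if i < n \<and> j < n then A i j else if i < n \<or> j < n then P else M)"

lemma sym_trop_singular_bordered:
  "I \<subseteq> {..<n} \<Longrightarrow> J \<subseteq> {..<n} \<Longrightarrow> sym_trop_singular (bordered A n P M) I J = sym_trop_singular A I J"
  by (rule sym_trop_singular_cong) (auto simp: bordered_def)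

lemma bordered_optimal_fixes_corner:
  assumes bounds: "\<forall>i<n. \<forall>j<n. M < A i j \<and> A i j < P"
    and IJ: "I \<subseteq> {..n}" "J \<subseteq> {..n}" "n \<in> I" "n \<in> J"
    and opt: "trop_optimal (bordered A n P M) I J \<rho>"
  shows "\<rho> n = n"
proof (rule ccontr)
  let ?B = "bordered A n P M"
  assume "\<rho> n \<noteq> n"
  have bij: "bij_betw \<rho> I J" using opt by (simp add: trop_optimal_def)
  then obtain i where i: "i \<in> I" "\<rho> i = n"
    using IJ(4) by (metis bij_betw_imp_surj_on imageE)
  have "i \<le> n" "i \<noteq> n" using i IJ(1) \<open>\<rho> n \<noteq> n\<close> by auto
  then have "i < n" by simp
  have "\<rho> n \<in> J" using bij IJ(3) by (auto simp: bij_betw_def)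
  then have "\<rho> n < n" using IJ(2) \<open>\<rho> n \<noteq> n\<close> by (auto simp: le_neq_implies_less)
  have "finite I" using IJ(1) finite_subset by blast
  define \<sigma> where "\<sigma> = \<rho>(n := \<rho> i, i := \<rho> n)"
  have "\<sigma> = \<rho> \<circ> transpose n i" by (auto simp: \<sigma>_def transpose_def)
  moreover have "bij_betw (transpose n i) I I" using IJ(3) i(1) by simp
  ultimately have "bij_betw \<sigma> I J" using bij_betw_trans[OF _ bij] by simp
  have "trop_value ?B \<sigma> I
      = trop_value ?B \<rho> I - ?B n (\<rho> n) + ?B n (\<rho> i) - ?B i (\<rho> i) + ?B i (\<rho> n)"
    using \<open>finite I\<close> IJ(3) i(1) \<open>i < n\<close> by (simp add: \<sigma>_def trop_value_fun_upd)
  also have "\<dots> = trop_value ?B \<rho> I - P + M - P + A i (\<rho> n)"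
    using i(2) \<open>i < n\<close> \<open>\<rho> n < n\<close> by (simp add: bordered_def)
  also have "\<dots> < trop_value ?B \<rho> I"
    using bounds \<open>i < n\<close> \<open>\<rho> n < n\<close> by fastforce
  finally show False using opt \<open>bij_betw \<sigma> I J\<close> unfolding trop_optimal_def by fastforce
qed

lemma bordered_optimal_removable_pair:
  assumes bounds: "\<forall>i<n. \<forall>j<n. M < A i j \<and> A i j < P"
    and IJ: "I \<subseteq> {..n}" "J \<subseteq> {..n}" "n \<in> I \<union> J"
    and opt: "trop_optimal (bordered A n P M) I J \<rho>"
  obtains i where "i \<in> I" "I - {i} \<subseteq> {..<n}" "J - {\<rho> i} \<subseteq> {..<n}"
proof (cases "n \<in> I")
  case True
  have "J - {\<rho> n} \<subseteq> {..<n}"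
  proof (cases "n \<in> J")
    case True
    have "\<rho> n = n" using bordered_optimal_fixes_corner[OF bounds IJ(1,2) \<open>n \<in> I\<close> True opt] .
    then show ?thesis using IJ(2) by fastforce
  next
    case False
    then show ?thesis using IJ(2) by fastforce
  qed
  then show ?thesis using that[of n] True IJ(1) by fastforce
next
  case False
  then have "n \<in> J" using IJ(3) by blast
  then obtain i where "i \<in> I" "\<rho> i = n"
    using opt unfolding trop_optimal_def by (metis bij_betw_imp_surj_on imageE)
  then show ?thesis using that[of i] False IJ by fastforce
qed

lemma bordered_nonsingular_extend:
  assumes bounds: "\<forall>i<n. \<forall>j<n. M < A i j \<and> A i j < P"
    and IJ: "I \<subseteq> {..<n}" "J \<subseteq> {..<n}" and nonsing: "\<not> sym_trop_singular A I J"
  shows "\<not> sym_trop_singular (bordered A n P M) (insert n I) (insert n J)"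
proof
  assume "sym_trop_singular (bordered A n P M) (insert n I) (insert n J)"
  moreover have "insert n I \<subseteq> {..n}" "insert n J \<subseteq> {..n}" using IJ by auto
  then have "\<rho> n = n" if "trop_optimal (bordered A n P M) (insert n I) (insert n J) \<rho>" for \<rho>
    using bordered_optimal_fixes_corner[OF bounds _ _ _ _ that] by simp
  moreover have "finite I" "n \<notin> I" "n \<notin> J" using IJ finite_subset by auto
  ultimately have "sym_trop_singular (bordered A n P M) I J"
    using sym_trop_singular_restrict by metis
  then show False using nonsing sym_trop_singular_bordered[OF IJ] by blast
qed

lemma bordered_nonsingular_reduce:
  assumes bounds: "\<forall>i<n. \<forall>j<n. M < A i j \<and> A i j < P"
    and IJ: "I \<subseteq> {..n}" "J \<subseteq> {..n}" "card I = card J"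
    and nonsing: "\<not> sym_trop_singular (bordered A n P M) I J"
  obtains I' J' where "I' \<subseteq> {..<n}" "J' \<subseteq> {..<n}" "card I' = card J'" "card I \<le> card I' + 1"
    "\<not> sym_trop_singular A I' J'"
proof (cases "n \<in> I \<union> J")
  case False
  then have "I \<subseteq> {..<n}" "J \<subseteq> {..<n}" using IJ by (auto simp: less_le)
  then show ?thesis using that[of I J] IJ(3) nonsing sym_trop_singular_bordered by simp
next
  case True
  have fin: "finite I" "finite J" using IJ finite_subset by blast+
  obtain \<rho> where opt: "trop_optimal (bordered A n P M) I J \<rho>"
    using trop_optimal_exists[OF fin IJ(3)] .
  obtain i where i: "i \<in> I" and sub: "I - {i} \<subseteq> {..<n}" "J - {\<rho> i} \<subseteq> {..<n}"
    using bordered_optimal_removable_pair[OF bounds IJ(1,2) True opt] .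
  have "\<rho> i \<in> J" using opt i by (auto simp: trop_optimal_def bij_betw_def)
  then have I: "insert i (I - {i}) = I" and J: "insert (\<rho> i) (J - {\<rho> i}) = J" using i by auto
  have "\<not> sym_trop_singular (bordered A n P M) (I - {i}) (J - {\<rho> i})"
    using sym_trop_singular_extend[of "I - {i}" i "\<rho> i" "J - {\<rho> i}" "bordered A n P M" \<rho>]
      fin opt nonsing unfolding I J by blast
  then show ?thesis
    using that[OF sub] sym_trop_singular_bordered[OF sub] fin IJ(3) i \<open>\<rho> i \<in> J\<close> by simp
qed

lemma sym_trop_rank_bordered_le:
  assumes bounds: "\<forall>i<n. \<forall>j<n. M < A i j \<and> A i j < P"
  shows "sym_trop_rank (n + 1) (bordered A n P M) \<le> sym_trop_rank n A + 1"
proof -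
  obtain I J where "I \<subseteq> {..n}" "J \<subseteq> {..n}" "card I = sym_trop_rank (n + 1) (bordered A n P M)"
    "card J = card I" "\<not> sym_trop_singular (bordered A n P M) I J"
    using sym_trop_rank_attained[of "n + 1"] by (metis lessThan_Suc_atMost Suc_eq_plus1)
  moreover obtain I' J' where "I' \<subseteq> {..<n}" "J' \<subseteq> {..<n}" "card I' = card J'"
    "card I \<le> card I' + 1" "\<not> sym_trop_singular A I' J'"
    using bordered_nonsingular_reduce[OF bounds] calculation by metis
  ultimately show ?thesis using sym_trop_rank_ge[of I' n J' A] by linarith
qed

lemma sym_trop_rank_bordered_ge:
  assumes bounds: "\<forall>i<n. \<forall>j<n. M < A i j \<and> A i j < P"
  shows "sym_trop_rank n A + 1 \<le> sym_trop_rank (n + 1) (bordered A n P M)"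
proof -
  obtain I J where IJ: "I \<subseteq> {..<n}" "J \<subseteq> {..<n}" "card I = sym_trop_rank n A"
    "card J = sym_trop_rank n A" and "\<not> sym_trop_singular A I J"
    by (rule sym_trop_rank_attained)
  then have "\<not> sym_trop_singular (bordered A n P M) (insert n I) (insert n J)"
    by (intro bordered_nonsingular_extend[OF bounds])
  moreover have "card (insert n I) = sym_trop_rank n A + 1" "card (insert n J) = sym_trop_rank n A + 1"
    using IJ by (auto simp: finite_subset card_insert_if)
  moreover have "insert n I \<subseteq> {..<n + 1}" "insert n J \<subseteq> {..<n + 1}" using IJ by auto
  ultimately show ?thesis using sym_trop_rank_ge by metis
qed

theorem lemma7:
  fixes A :: "nat \<Rightarrow> nat \<Rightarrow> real" and n r :: nat and M P :: real
  assumes symA: "\<forall>i<n. \<forall>j<n. A i j = A j i"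
    and rank: "sym_trop_rank n A = r"
    and M_lt: "\<forall>i<n. \<forall>j<n. M < A i j"
    and P_gt: "\<forall>i<n. \<forall>j<n. A i j < P"
  shows "sym_trop_rank (n + 1)
           (\<lambda>i j. if i < n \<and> j < n then A i j else if i < n \<or> j < n then P else M) = r + 1"
proof -
  have bounds: "\<forall>i<n. \<forall>j<n. M < A i j \<and> A i j < P" using M_lt P_gt by blast
  have "sym_trop_rank (n + 1) (bordered A n P M) = r + 1"
    using sym_trop_rank_bordered_le[OF bounds] sym_trop_rank_bordered_ge[OF bounds] rank by simp
  then show ?thesis by (simp add: bordered_def)
qed

end
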